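(* Let $(\vec u,\vec B)$ and $(\vec t,\vec C)$ be proper factorization patterns over $A$, and let $(v_n)_n$ and $(w_n)_n$ be sequences of words such that $(v_n)_n$ is $(\vec u,\vec B)$-adequate, $(w_n)_n$ is $(\vec t,\vec C)$-adequate, and $v_n\sim_n w_n$ for every $n\ge0$. Then $\vec u=\vec t$ and $\vec B=\vec C$.
   Context: $\mathrm{alph}(u)$ is the set of letters of $u$; for $B\subseteq A$, $B^{=}=\{w\in B^*:\mathrm{alph}(w)=B\}$. $u\lhd v$ means $u$ is a scattered subword of $v$; $\mathrm{Sub}_n(u)=\{w:|w|\le n,\ w\lhd u\}$; $u\sim_n v$ iff $\mathrm{Sub}_n(u)=\mathrm{Sub}_n(v)$. A factorization pattern is $(\vec u,\vec B)$ with $\vec u=(u_0,\dots,u_p)\in(A^* )^{p+1}$, $\vec B=(B_1,\dots,B_p)$ nonempty subsets of $A$. $L_n(\vec u,\vec B)=u_0(B_1^{=})^nu_1\cdots u_{p-1}(B_p^{=})^nu_p$; $(w_n)_n$ is $(\vec u,\vec B)$-adequate if $w_n\in L_n(\vec u,\vec B)$ for all $n$. A pattern is proper if: (1) for $1\le i\le p$ with $u_i\neq\varepsilon$, the first letter of $u_i$ is not in $B_i$, and for $0\le i\le p-1$ with $u_i\neq\varepsilon$, the last letter of $u_i$ is not in $B_{i+1}$; (2) for $1\le i\le p-1$ with $u_i=\varepsilon$, $B_i\not\subseteq B_{i+1}$ and $B_{i+1}\not\subseteq B_i$. *)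

theory Defs
  imports Main "HOL-Library.Sublist"
begin

definition full_words :: "'a set \<Rightarrow> 'a list set" where
  "full_words B = {w. set w = B}"

definition lang_pow :: "'a list set \<Rightarrow> nat \<Rightarrow> 'a list set" where
  "lang_pow L n = {concat ws | ws. length ws = n \<and> set ws \<subseteq> L}"

definition lang_conc :: "'a list set \<Rightarrow> 'a list set \<Rightarrow> 'a list set" where
  "lang_conc K L = {x @ y | x y. x \<in> K \<and> y \<in> L}"

text \<open>L_n(us,Bs) = u_0 (B_1^=)^n u_1 ... (B_p^=)^n u_p, with us = [u_0,...,u_p],
  Bs = [B_1,...,B_p].\<close>
fun Lpat :: "nat \<Rightarrow> 'a list list \<Rightarrow> 'a set list \<Rightarrow> 'a list set" where
  "Lpat n [u] [] = {u}"
| "Lpat n (u # us) (B # Bs) =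
     lang_conc {u} (lang_conc (lang_pow (full_words B) n) (Lpat n us Bs))"
| "Lpat n _ _ = {}"

definition adequate :: "'a list list \<Rightarrow> 'a set list \<Rightarrow> (nat \<Rightarrow> 'a list) \<Rightarrow> bool" where
  "adequate us Bs w \<longleftrightarrow> (\<forall>n. w n \<in> Lpat n us Bs)"

definition fact_pattern :: "'a set \<Rightarrow> 'a list list \<Rightarrow> 'a set list \<Rightarrow> bool" where
  "fact_pattern A us Bs \<longleftrightarrow> length us = length Bs + 1
     \<and> (\<forall>u\<in>set us. set u \<subseteq> A) \<and> (\<forall>B\<in>set Bs. B \<noteq> {} \<and> B \<subseteq> A)"

text \<open>Proper pattern (1-based indices of the paper: u_i = us!i, B_i = Bs!(i-1)).\<close>
definition proper :: "'a set \<Rightarrow> 'a list list \<Rightarrow> 'a set list \<Rightarrow> bool" where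
  "proper A us Bs \<longleftrightarrow> fact_pattern A us Bs
     \<and> (\<forall>i. 1 \<le> i \<and> i \<le> length Bs \<and> us ! i \<noteq> [] \<longrightarrow> hd (us ! i) \<notin> Bs ! (i - 1))
     \<and> (\<forall>i. i \<le> length Bs - 1 \<and> i < length Bs \<and> us ! i \<noteq> [] \<longrightarrow> last (us ! i) \<notin> Bs ! i)
     \<and> (\<forall>i. 1 \<le> i \<and> i \<le> length Bs - 1 \<and> us ! i = [] \<longrightarrow>
            \<not> Bs ! (i - 1) \<subseteq> Bs ! i \<and> \<not> Bs ! i \<subseteq> Bs ! (i - 1))"

definition Sub :: "nat \<Rightarrow> 'a list \<Rightarrow> 'a list set" where
  "Sub n u = {w. length w \<le> n \<and> subseq w u}"

definition simeq :: "nat \<Rightarrow> 'a list \<Rightarrow> 'a list \<Rightarrow> bool" where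
  "simeq n u v \<longleftrightarrow> Sub n u = Sub n v"

end

theory Submission
  imports Defs
begin

text \<open>For n \<ge> |z|, a word z is a scattered subword of a word of L_n(u, B) iff z belongs to the
  product u_0' B_1^* u_1' \<dots> B_p^* u_p', where u_i' lets each letter of u_i be dropped: the
  n factors of (B_i^=)^n supply every word over B_i of length at most n. Hence the hypotheses say
  that both patterns yield the same product language. Properness makes these products reduced
  (no atom is absorbed by a neighbouring star), and a reduced product is determined by its
  language. The latter is shown by comparing the products from the left: the canonical witness
  word of a reduced product accepts no additional prefix unless a leading star absorbs it, and
  this distinguishes any two different heads.\<close>

text \<open>A list of atoms denotes a product of languages: Opt a stands for a + \<epsilon> and Star B
  for B^*.\<close>
datatype 'a atom = Opt 'a | Star "'a set"

fun in_product :: "'a atom list \<Rightarrow> 'a list \<Rightarrow> bool" where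
  "in_product [] z \<longleftrightarrow> z = []"
| "in_product (Opt a # P) z \<longleftrightarrow> in_product P z \<or> (\<exists>z'. z = a # z' \<and> in_product P z')"
| "in_product (Star B # P) z \<longleftrightarrow> (\<exists>y z'. z = y @ z' \<and> set y \<subseteq> B \<and> in_product P z')"

lemma subseq_set_subset: "subseq x y \<Longrightarrow> set x \<subseteq> set y"
  by (induction rule: list_emb.induct) auto

lemma in_product_subseq: "in_product P z \<Longrightarrow> subseq y z \<Longrightarrow> in_product P y"
proof (induction P arbitrary: y z)
  case Nil thus ?case by simp
next
  case (Cons x P)
  show ?case
  proof (cases x)
    case (Opt a)
    from Cons.prems Opt consider "in_product P z" | z' where "z = a # z'" "in_product P z'"
      by auto
    then show ?thesis
    proof cases
      case 1 thus ?thesis using Cons.IH[of z y] Cons.prems(2) Opt by simp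
    next
      case 2
      show ?thesis
      proof (cases "y \<noteq> [] \<and> hd y = a")
        case True
        then obtain y' where "y = a # y'" by (cases y) auto
        with Cons.prems(2) 2 Cons.IH[of z' y'] Opt show ?thesis by auto
      next
        case False
        with Cons.prems(2) 2 have "subseq y z'" by (cases y) auto
        with Cons.IH[of z' y] 2 Opt show ?thesis by simp
      qed
    qed
  next
    case (Star B)
    from Cons.prems Star obtain u z' where z: "z = u @ z'" "set u \<subseteq> B" "in_product P z'"
      by auto
    from Cons.prems(2) z obtain y1 y2 where y: "y = y1 @ y2" "subseq y1 u" "subseq y2 z'"
      by (auto elim: subseq_appendE)
    have "set y1 \<subseteq> B" using subseq_set_subset[OF y(2)] z(2) by blast
    moreover have "in_product P y2" using Cons.IH y(3) z(3) by blast
    ultimately show ?thesis using y Star by auto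
  qed
qed

lemma in_product_ConsD: "in_product P (c # z) \<Longrightarrow> in_product P z"
  by (erule in_product_subseq) (intro list_emb_Cons subseq_order.order_refl)

lemma in_product_Star_skip: "in_product P z \<Longrightarrow> in_product (Star B # P) z"
  by force

lemma in_product_Star_empty: "in_product (Star {} # P) = in_product P"
  by (auto simp: fun_eq_iff)

lemma in_product_Star_Cons_notin:
  "c \<notin> B \<Longrightarrow> in_product (Star B # P) (c # z) \<longleftrightarrow> in_product P (c # z)"
  by (auto simp: Cons_eq_append_conv) force

lemma in_product_Star_Cons_in:
  assumes "c \<in> B"
  shows "in_product (Star B # P) (c # z) \<longleftrightarrow> in_product (Star B # P) z"
proof
  assume "in_product (Star B # P) (c # z)"
  then obtain y z' where yz: "c # z = y @ z'" "set y \<subseteq> B" "in_product P z'" by auto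
  show "in_product (Star B # P) z"
  proof (cases y)
    case Nil
    with yz have "in_product P z" by (auto dest: in_product_ConsD)
    thus ?thesis by (rule in_product_Star_skip)
  next
    case (Cons d y')
    with yz show ?thesis by auto
  qed
next
  assume "in_product (Star B # P) z"
  then obtain y z' where "z = y @ z'" "set y \<subseteq> B" "in_product P z'" by auto
  with assms show "in_product (Star B # P) (c # z)"
    by (simp only: in_product.simps) (rule exI[of _ "c # y"], auto)
qed

lemma in_product_Star_append:
  "in_product (Star B # P) z \<Longrightarrow> set x \<subseteq> B \<Longrightarrow> in_product (Star B # P) (x @ z)"
  by auto (metis append.assoc le_sup_iff set_append)

lemma in_product_Opt_Cons_same: "in_product (Opt a # P) (a # z) \<longleftrightarrow> in_product P z"
  by (auto dest: in_product_ConsD)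

lemma in_product_Opt_Cons_other:
  "c \<noteq> a \<Longrightarrow> in_product (Opt a # P) (c # z) \<longleftrightarrow> in_product P (c # z)"
  by auto

definition enum_set :: "'a set \<Rightarrow> 'a list" where
  "enum_set B = (SOME xs. set xs = B)"

lemma set_enum_set: "finite B \<Longrightarrow> set (enum_set B) = B"
  unfolding enum_set_def by (rule someI_ex) (rule finite_list)

fun witness :: "'a atom list \<Rightarrow> 'a list" where
  "witness [] = []"
| "witness (Opt a # P) = a # witness P"
| "witness (Star B # P) = enum_set B @ witness P"

fun admissible_atom :: "'a atom \<Rightarrow> bool" where
  "admissible_atom (Opt a) = True"
| "admissible_atom (Star B) = (finite B \<and> B \<noteq> {})"

fun separated :: "'a atom \<Rightarrow> 'a atom \<Rightarrow> bool" where
  "separated (Opt a) (Opt b) = True"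
| "separated (Opt a) (Star B) = (a \<notin> B)"
| "separated (Star B) (Opt a) = (a \<notin> B)"
| "separated (Star B) (Star C) = (\<not> B \<subseteq> C \<and> \<not> C \<subseteq> B)"

fun reduced :: "'a atom list \<Rightarrow> bool" where
  "reduced [] = True"
| "reduced [x] = admissible_atom x"
| "reduced (x # y # P) = (admissible_atom x \<and> separated x y \<and> reduced (y # P))"

lemma reduced_Cons:
  "reduced (x # P) \<longleftrightarrow> admissible_atom x \<and> reduced P \<and> (P \<noteq> [] \<longrightarrow> separated x (hd P))"
  by (cases P) auto

lemma in_product_witness: "reduced P \<Longrightarrow> in_product P (witness P)"
proof (induction P)
  case Nil thus ?case by simp
next
  case (Cons x P)
  show ?case
  proof (cases x)
    case (Opt a) thus ?thesis using Cons by (auto simp: reduced_Cons)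
  next
    case (Star B)
    with Cons have "finite B" "in_product P (witness P)" by (auto simp: reduced_Cons)
    thus ?thesis using Star set_enum_set by fastforce
  qed
qed

lemma reduced_prefix_witness:
  "reduced P \<Longrightarrow> in_product P (x @ witness P) \<Longrightarrow>
   x = [] \<or> (\<exists>B P'. P = Star B # P' \<and> set x \<subseteq> B)"
proof (induction P arbitrary: x)
  case Nil thus ?case by simp
next
  case (Cons at P)
  show ?case
  proof (cases at)
    case (Opt a)
    have no_a: "\<not> in_product P (x' @ a # witness P)" for x'
    proof
      assume "in_product P (x' @ a # witness P)"
      with Cons.IH[of "x' @ [a]"] Cons.prems(1) Opt obtain B P' where "P = Star B # P'" "a \<in> B"
        by (auto simp: reduced_Cons)
      with Cons.prems(1) Opt show False by (auto simp: reduced_Cons)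
    qed
    from Cons.prems(2) Opt consider "in_product P (x @ a # witness P)"
      | z' where "x @ a # witness P = a # z'" "in_product P z'"
      by auto
    then show ?thesis
    proof cases
      case 1 with no_a show ?thesis by blast
    next
      case 2 with no_a show ?thesis by (cases x) auto
    qed
  next
    case (Star B)
    with Cons.prems have fin: "finite B" by (auto simp: reduced_Cons)
    from Cons.prems(2) Star obtain y z' where yz:
      "x @ enum_set B @ witness P = y @ z'" "set y \<subseteq> B" "in_product P z'"
      by auto
    show ?thesis
    proof (cases "length x \<le> length y")
      case True
      with yz(1) have "set x \<subseteq> set y"
        by (metis append_eq_append_conv_if set_take_subset take_all_iff take_append)
      thus ?thesis using yz Star by auto
    next
      case False
      with yz(1) obtain x1 where x1: "x = y @ x1" "x1 \<noteq> []"
        by (metis append_eq_append_conv_if append_take_drop_id drop_eq_Nil linorder_not_less)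
      with yz have "in_product P ((x1 @ enum_set B) @ witness P)" by simp
      from Cons.IH[OF _ this] Cons.prems(1) x1 obtain C P' where "P = Star C # P'" "B \<subseteq> C"
        using set_enum_set[OF fin] by (auto simp: reduced_Cons)
      with Cons.prems(1) Star show ?thesis by (auto simp: reduced_Cons)
    qed
  qed
qed

lemma reduced_Opt_witness: "reduced (Opt a # R) \<Longrightarrow> \<not> in_product R (a # witness R)"
  using reduced_prefix_witness[of R "[a]"] by (auto simp: reduced_Cons)

lemma reduced_Star_witness: "reduced (Star C # R) \<Longrightarrow> \<not> in_product R (enum_set C @ witness R)"
proof
  assume r: "reduced (Star C # R)" and h: "in_product R (enum_set C @ witness R)"
  from r have "reduced R" "finite C" "C \<noteq> {}" by (auto simp: reduced_Cons)
  hence "enum_set C \<noteq> []" by (metis set_enum_set set_empty)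
  with reduced_prefix_witness[OF \<open>reduced R\<close> h] obtain C' R' where
    "R = Star C' # R'" "set (enum_set C) \<subseteq> C'" by auto
  with r set_enum_set[OF \<open>finite C\<close>] show False by (simp add: reduced_Cons)
qed

fun not_absorbed :: "'a set \<Rightarrow> 'a atom list \<Rightarrow> bool" where
  "not_absorbed B [] = True"
| "not_absorbed B (Opt a # _) = (a \<notin> B)"
| "not_absorbed B (Star C # _) = (\<not> C \<subseteq> B)"

lemma reduced_not_absorbed_empty: "reduced P \<Longrightarrow> not_absorbed {} P"
  by (cases P rule: reduced.cases) (auto elim: admissible_atom.elims)

lemma reduced_Star_not_absorbed: "reduced (Star C # R) \<Longrightarrow> not_absorbed C R"
  by (cases R; cases "hd R") auto

lemma Star_product_eq_Nil:
  assumes "reduced Q" "not_absorbed B Q" "in_product [Star B] = in_product (Star B # Q)"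
  shows "Q = []"
proof (rule ccontr)
  assume "Q \<noteq> []"
  then obtain x Q' where Q: "Q = x # Q'" by (cases Q) auto
  have "in_product (Star B # Q) (witness Q)"
    using in_product_witness[OF assms(1)] by (rule in_product_Star_skip)
  hence "in_product [Star B] (witness Q)" by (simp only: assms(3))
  hence "set (witness Q) \<subseteq> B" by auto
  with assms Q show False
    by (cases x) (auto simp: reduced_Cons set_enum_set)
qed

lemma Opt_Opt_heads:
  assumes r: "reduced (Opt a # R)" and aB: "a \<notin> B" and bB: "b \<notin> B"
    and E: "in_product (Star B # Opt a # R) = in_product (Star B # Opt b # S)"
  shows "a = b \<and> in_product R = in_product S"
proof -
  have ea: "in_product R z \<longleftrightarrow> in_product (Opt b # S) (a # z)" for z
  proof -
    have "in_product R z \<longleftrightarrow> in_product (Star B # Opt a # R) (a # z)"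
      by (simp only: in_product_Star_Cons_notin[OF aB] in_product_Opt_Cons_same)
    also have "\<dots> \<longleftrightarrow> in_product (Opt b # S) (a # z)"
      by (simp only: E in_product_Star_Cons_notin[OF aB])
    finally show ?thesis .
  qed
  have eb: "in_product S z \<longleftrightarrow> in_product (Opt a # R) (b # z)" for z
  proof -
    have "in_product S z \<longleftrightarrow> in_product (Star B # Opt b # S) (b # z)"
      by (simp only: in_product_Star_Cons_notin[OF bB] in_product_Opt_Cons_same)
    also have "\<dots> \<longleftrightarrow> in_product (Opt a # R) (b # z)"
      by (simp only: E[symmetric] in_product_Star_Cons_notin[OF bB])
    finally show ?thesis .
  qed
  have "a = b"
  proof (rule ccontr)
    assume ab: "a \<noteq> b"
    have "in_product R (witness R)"
      using r by (intro in_product_witness) (simp add: reduced_Cons)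
    hence "in_product S (a # witness R)"
      by (simp only: ea in_product_Opt_Cons_other[OF ab])
    hence "in_product R (b # a # witness R)"
      by (simp only: eb in_product_Opt_Cons_other[OF ab[symmetric]])
    hence "in_product R (a # witness R)" by (rule in_product_ConsD)
    with reduced_Opt_witness[OF r] show False by contradiction
  qed
  with ea show ?thesis by (simp add: fun_eq_iff in_product_Opt_Cons_same del: in_product.simps)
qed

lemma Opt_Star_heads_impossible:
  assumes r: "reduced (Opt a # R)" and aB: "a \<notin> B" and CB: "\<not> C \<subseteq> B"
    and E: "in_product (Star B # Opt a # R) = in_product (Star B # Star C # S)"
  shows False
proof -
  have wR: "in_product R (witness R)"
    using r by (intro in_product_witness) (simp add: reduced_Cons)
  have "in_product R (a # witness R)"
  proof (cases "a \<in> C")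
    case True
    have eq: "in_product R z \<longleftrightarrow> in_product (Star C # S) z" for z
    proof -
      have "in_product R z \<longleftrightarrow> in_product (Star B # Opt a # R) (a # z)"
        by (simp only: in_product_Star_Cons_notin[OF aB] in_product_Opt_Cons_same)
      also have "\<dots> \<longleftrightarrow> in_product (Star C # S) z"
        by (simp only: E in_product_Star_Cons_notin[OF aB] in_product_Star_Cons_in[OF True])
      finally show ?thesis .
    qed
    show ?thesis using wR by (simp only: eq in_product_Star_Cons_in[OF True])
  next
    case False
    from CB obtain c where c: "c \<in> C" "c \<notin> B" by auto
    have Star_C_to_R: "in_product R z" if "in_product (Star C # S) z" for z
    proof -
      from that have "in_product (Star B # Star C # S) (c # z)"
        by (simp only: in_product_Star_Cons_in[OF c(1)] in_product_Star_Cons_notin[OF c(2)])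
      hence "in_product (Opt a # R) (c # z)"
        by (simp only: E[symmetric] in_product_Star_Cons_notin[OF c(2)])
      thus "in_product R z"
        by (cases "c = a") (auto simp: in_product_Opt_Cons_same dest: in_product_ConsD)
    qed
    have "in_product (Star B # Opt a # R) (a # witness R)"
      using wR by (simp only: in_product_Star_Cons_notin[OF aB] in_product_Opt_Cons_same)
    hence "in_product S (a # witness R)"
      by (simp only: E in_product_Star_Cons_notin[OF aB] in_product_Star_Cons_notin[OF False])
    thus ?thesis by (intro Star_C_to_R in_product_Star_skip)
  qed
  with reduced_Opt_witness[OF r] show False by blast
qed

lemma reduced_Star_not_droppable:
  assumes r: "reduced (Star C # R)" and drop: "in_product (Star C # R) = in_product R"
  shows False
proof -
  have "finite C" "reduced R" using r by (auto simp: reduced_Cons)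
  hence "in_product (Star C # R) (witness R)"
    by (simp only: drop in_product_witness)
  hence "in_product (Star C # R) (enum_set C @ witness R)"
    using in_product_Star_append set_enum_set[OF \<open>finite C\<close>] by blast
  hence "in_product R (enum_set C @ witness R)" by (simp only: drop)
  with reduced_Star_witness[OF r] show False by contradiction
qed

lemma Star_Star_heads_strip:
  assumes rP: "reduced (Star C # R)" and rQ: "reduced (Star D # S)"
    and CB: "\<not> C \<subseteq> B" and DB: "\<not> D \<subseteq> B"
    and E: "in_product (Star B # Star C # R) = in_product (Star B # Star D # S)"
  shows "in_product (Star C # R) = in_product (Star D # S)"
proof -
  from CB obtain c where c: "c \<in> C" "c \<notin> B" by auto
  from DB obtain d where d: "d \<in> D" "d \<notin> B" by auto
  have ec: "in_product (Star C # R) z \<longleftrightarrow> in_product (Star D # S) (c # z)" for z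
  proof -
    have "in_product (Star C # R) z \<longleftrightarrow> in_product (Star B # Star C # R) (c # z)"
      by (simp only: in_product_Star_Cons_notin[OF c(2)] in_product_Star_Cons_in[OF c(1)])
    also have "\<dots> \<longleftrightarrow> in_product (Star D # S) (c # z)"
      by (simp only: E in_product_Star_Cons_notin[OF c(2)])
    finally show ?thesis .
  qed
  have ed: "in_product (Star D # S) z \<longleftrightarrow> in_product (Star C # R) (d # z)" for z
  proof -
    have "in_product (Star D # S) z \<longleftrightarrow> in_product (Star B # Star D # S) (d # z)"
      by (simp only: in_product_Star_Cons_notin[OF d(2)] in_product_Star_Cons_in[OF d(1)])
    also have "\<dots> \<longleftrightarrow> in_product (Star C # R) (d # z)"
      by (simp only: E[symmetric] in_product_Star_Cons_notin[OF d(2)])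
    finally show ?thesis .
  qed
  consider "c \<in> D" | "d \<in> C" | "c \<notin> D" "d \<notin> C" by blast
  then show ?thesis
  proof cases
    case 1 thus ?thesis using ec by (simp add: fun_eq_iff in_product_Star_Cons_in del: in_product.simps)
  next
    case 2 thus ?thesis using ed by (simp add: fun_eq_iff in_product_Star_Cons_in del: in_product.simps)
  next
    case 3
    have "in_product (Star C # R) = in_product R"
    proof (rule ext, rule iffI)
      fix z assume "in_product (Star C # R) z"
      hence "in_product S (c # z)" by (simp only: ec in_product_Star_Cons_notin[OF 3(1)])
      hence "in_product (Star D # S) (c # z)" by (rule in_product_Star_skip)
      hence "in_product R (d # c # z)" by (simp only: ed in_product_Star_Cons_notin[OF 3(2)])
      thus "in_product R z" by (auto dest: in_product_ConsD)
    next
      fix z assume "in_product R z"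
      thus "in_product (Star C # R) z" by (rule in_product_Star_skip)
    qed
    with reduced_Star_not_droppable[OF rP] show ?thesis by blast
  qed
qed

lemma Star_head_subset:
  assumes "reduced (Star D # S)" and E: "in_product (Star C # R) = in_product (Star D # S)"
  shows "C \<subseteq> D"
proof
  fix c assume "c \<in> C"
  have "in_product (Star D # S) (witness (Star D # S))" by (rule in_product_witness[OF assms(1)])
  hence "in_product (Star C # R) (c # witness (Star D # S))"
    by (simp only: E[symmetric] in_product_Star_Cons_in[OF \<open>c \<in> C\<close>])
  hence "in_product (Star D # S) ([c] @ witness (Star D # S))" by (simp only: E) simp
  from reduced_prefix_witness[OF assms(1) this] show "c \<in> D" by simp
qed

lemma reduced_heads_step:
  assumes rP: "reduced (x # R)" and rQ: "reduced (y # S)"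
    and aP: "not_absorbed B (x # R)" and aQ: "not_absorbed B (y # S)"
    and E: "in_product (Star B # x # R) = in_product (Star B # y # S)"
  obtains B' where "x = y" "not_absorbed B' R" "not_absorbed B' S"
    "in_product (Star B' # R) = in_product (Star B' # S)"
proof -
  have tails: "reduced R" "reduced S" using rP rQ by (auto simp: reduced_Cons)
  show thesis
  proof (cases x; cases y)
    fix a b assume xy: "x = Opt a" "y = Opt b"
    with Opt_Opt_heads[of a R B b S] rP aP aQ E
    have "a = b" "in_product R = in_product S" by auto
    with that[of "{}"] xy tails show thesis
      by (simp add: reduced_not_absorbed_empty in_product_Star_empty)
  next
    fix a D assume "x = Opt a" "y = Star D"
    with Opt_Star_heads_impossible[of a R B D S] rP aP aQ E show thesis by auto
  next
    fix C b assume "x = Star C" "y = Opt b"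
    with Opt_Star_heads_impossible[of b S B C R] rQ aP aQ E show thesis by auto
  next
    fix C D assume xy: "x = Star C" "y = Star D"
    with Star_Star_heads_strip[of C R D S B] rP rQ aP aQ E
    have E': "in_product (Star C # R) = in_product (Star D # S)" by auto
    with Star_head_subset[of D S C R] Star_head_subset[of C R D S] rP rQ xy
    have "C = D" by auto
    with that[of C] xy E' rP rQ show thesis by (simp add: reduced_Star_not_absorbed)
  qed
qed

text \<open>The leading star B is what makes the induction go through: after equal star
  heads C are removed, the tails are only known to agree behind the star C.\<close>
lemma reduced_product_unique_after_Star:
  assumes "reduced P" "reduced Q" "not_absorbed B P" "not_absorbed B Q"
    and "in_product (Star B # P) = in_product (Star B # Q)"
  shows "P = Q"
  using assms
proof (induction P arbitrary: B Q)
  case Nil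
  thus ?case using Star_product_eq_Nil[of Q B] by metis
next
  case (Cons x R)
  show ?case
  proof (cases Q)
    case Nil
    with Cons.prems Star_product_eq_Nil[of "x # R" B] show ?thesis by (metis list.distinct(1))
  next
    case (Cons y S)
    obtain B' where "x = y" "not_absorbed B' R" "not_absorbed B' S"
      "in_product (Star B' # R) = in_product (Star B' # S)"
      using reduced_heads_step Cons.prems[unfolded \<open>Q = y # S\<close>] by metis
    moreover have "reduced R" "reduced S"
      using Cons.prems(1,2) \<open>Q = y # S\<close> by (auto simp: reduced_Cons)
    ultimately show ?thesis using Cons.IH \<open>Q = y # S\<close> by blast
  qed
qed

theorem reduced_product_unique:
  assumes "reduced P" "reduced Q" "in_product P = in_product Q"
  shows "P = Q"
  using reduced_product_unique_after_Star[of P Q "{}"] assms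
  by (simp add: reduced_not_absorbed_empty in_product_Star_empty)

fun pattern_product :: "'a list list \<Rightarrow> 'a set list \<Rightarrow> 'a atom list" where
  "pattern_product [u] [] = map Opt u"
| "pattern_product (u # us) (B # Bs) = map Opt u @ Star B # pattern_product us Bs"
| "pattern_product _ _ = []"

lemma in_product_map_Opt_append:
  "in_product (map Opt u @ P) z \<longleftrightarrow> (\<exists>z0 z1. z = z0 @ z1 \<and> subseq z0 u \<and> in_product P z1)"
proof (induction u arbitrary: z)
  case Nil thus ?case by (auto dest: list_emb_Nil2)
next
  case (Cons a u)
  show ?case
  proof
    assume "in_product (map Opt (a # u) @ P) z"
    then consider "in_product (map Opt u @ P) z"
      | z' where "z = a # z'" "in_product (map Opt u @ P) z'"
      by auto
    then show "\<exists>z0 z1. z = z0 @ z1 \<and> subseq z0 (a # u) \<and> in_product P z1"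
    proof cases
      case 1 with Cons.IH show ?thesis by fastforce
    next
      case 2
      with Cons.IH obtain z0 z1 where "z = (a # z0) @ z1" "subseq z0 u" "in_product P z1"
        by auto
      thus ?thesis by (intro exI[of _ "a # z0"] exI[of _ z1]) auto
    qed
  next
    assume "\<exists>z0 z1. z = z0 @ z1 \<and> subseq z0 (a # u) \<and> in_product P z1"
    then obtain z0 z1 where h: "z = z0 @ z1" "subseq z0 (a # u)" "in_product P z1" by blast
    show "in_product (map Opt (a # u) @ P) z"
    proof (cases "z0 \<noteq> [] \<and> hd z0 = a")
      case True
      then obtain z0' where "z0 = a # z0'" by (cases z0) auto
      with h Cons.IH show ?thesis by auto
    next
      case False
      with h(2) have "subseq z0 u" by (cases z0) auto
      with h Cons.IH show ?thesis by auto
    qed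
  qed
qed

text \<open>One letter is taken from each factor, so the hypothesis length y \<le> n is essential.\<close>
lemma subseq_concat_full_words_iff:
  assumes "length ws = n" "set ws \<subseteq> full_words B" "length y \<le> n"
  shows "subseq y (concat ws) \<longleftrightarrow> set y \<subseteq> B"
proof
  assume "subseq y (concat ws)"
  with assms(2) show "set y \<subseteq> B"
    by (force simp: full_words_def dest!: subseq_set_subset)
next
  show "set y \<subseteq> B \<Longrightarrow> subseq y (concat ws)"
    using assms
  proof (induction y arbitrary: ws n)
    case Nil thus ?case by simp
  next
    case (Cons c y)
    then obtain w ws' n' where ws: "ws = w # ws'" "n = Suc n'" by (cases ws) auto
    with Cons.prems have "c \<in> set w" by (auto simp: full_words_def)
    hence "subseq [c] w" by (simp add: subseq_singleton_left)
    moreover have "subseq y (concat ws')" using Cons.IH[of ws' n'] Cons.prems ws by auto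
    ultimately have "subseq ([c] @ y) (w @ concat ws')" by (rule list_emb_append_mono)
    thus ?case using ws by simp
  qed
qed

lemma subseq_concat_full_words_append_iff:
  assumes "length ws = n" "set ws \<subseteq> full_words B" "length z \<le> n"
    and tail: "\<And>z1. length z1 \<le> n \<Longrightarrow> subseq z1 v \<longleftrightarrow> in_product P z1"
  shows "subseq z (concat ws @ v) \<longleftrightarrow> in_product (Star B # P) z"
proof -
  have "(z = y @ z1 \<and> subseq y (concat ws) \<and> subseq z1 v) \<longleftrightarrow>
      (z = y @ z1 \<and> set y \<subseteq> B \<and> in_product P z1)" for y z1
    using assms by (cases "z = y @ z1") (simp_all add: subseq_concat_full_words_iff)
  thus ?thesis by (simp add: subseq_append_iff)
qed

lemma subseq_iff_in_pattern_product:
  assumes "length us = length Bs + 1" "v \<in> Lpat n us Bs" "length z \<le> n"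
  shows "subseq z v \<longleftrightarrow> in_product (pattern_product us Bs) z"
  using assms
proof (induction Bs arbitrary: us v z)
  case Nil
  then obtain u where "us = [u]" "v = u" by (cases us) auto
  thus ?case using in_product_map_Opt_append[of u "[]" z] by simp
next
  case (Cons B Bs)
  then obtain u us' where u: "us = u # us'" "length us' = length Bs + 1" by (cases us) auto
  with Cons.prems(2) obtain ws v' where v: "v = u @ concat ws @ v'" "length ws = n"
    "set ws \<subseteq> full_words B" "v' \<in> Lpat n us' Bs"
    by (auto simp: lang_conc_def lang_pow_def)
  have block: "subseq z2 (concat ws @ v') \<longleftrightarrow> in_product (Star B # pattern_product us' Bs) z2"
    if "length z2 \<le> n" for z2
    using subseq_concat_full_words_append_iff[OF v(2,3) that] Cons.IH[OF u(2) v(4)] by blast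
  have "(z = z0 @ z2 \<and> subseq z0 u \<and> subseq z2 (concat ws @ v')) \<longleftrightarrow>
      (z = z0 @ z2 \<and> subseq z0 u \<and> in_product (Star B # pattern_product us' Bs) z2)" for z0 z2
    using Cons.prems(3) block[of z2] by (cases "z = z0 @ z2") simp_all
  hence "subseq z v \<longleftrightarrow>
      (\<exists>z0 z2. z = z0 @ z2 \<and> subseq z0 u \<and> in_product (Star B # pattern_product us' Bs) z2)"
    by (simp only: v(1) subseq_append_iff)
  also have "\<dots> \<longleftrightarrow> in_product (pattern_product us (B # Bs)) z"
    by (simp only: u(1) pattern_product.simps in_product_map_Opt_append)
  finally show ?case .
qed

definition proper_boundaries :: "'a list list \<Rightarrow> 'a set list \<Rightarrow> bool" where
  "proper_boundaries us Bs \<longleftrightarrow>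
       (\<forall>i. 1 \<le> i \<and> i \<le> length Bs \<and> us ! i \<noteq> [] \<longrightarrow> hd (us ! i) \<notin> Bs ! (i - 1))
     \<and> (\<forall>i. i \<le> length Bs - 1 \<and> i < length Bs \<and> us ! i \<noteq> [] \<longrightarrow> last (us ! i) \<notin> Bs ! i)
     \<and> (\<forall>i. 1 \<le> i \<and> i \<le> length Bs - 1 \<and> us ! i = [] \<longrightarrow>
            \<not> Bs ! (i - 1) \<subseteq> Bs ! i \<and> \<not> Bs ! i \<subseteq> Bs ! (i - 1))"

lemma proper_iff_boundaries:
  "proper A us Bs \<longleftrightarrow> fact_pattern A us Bs \<and> proper_boundaries us Bs"
  unfolding proper_def proper_boundaries_def by blast

lemma proper_boundaries_Cons:
  assumes "proper_boundaries (u # us) (B # Bs)"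
  shows "proper_boundaries us Bs"
  unfolding proper_boundaries_def
proof (intro conjI allI impI)
  fix i assume h: "1 \<le> i \<and> i \<le> length Bs \<and> us ! i \<noteq> []"
  have "1 \<le> Suc i \<and> Suc i \<le> length (B # Bs) \<and> (u # us) ! Suc i \<noteq> []" using h by simp
  hence "hd ((u # us) ! Suc i) \<notin> (B # Bs) ! (Suc i - 1)"
    using assms unfolding proper_boundaries_def by blast
  moreover have "(B # Bs) ! (Suc i - 1) = Bs ! (i - 1)" using h by (cases i) auto
  ultimately show "hd (us ! i) \<notin> Bs ! (i - 1)" by simp
next
  fix i assume h: "i \<le> length Bs - 1 \<and> i < length Bs \<and> us ! i \<noteq> []"
  have "Suc i \<le> length (B # Bs) - 1 \<and> Suc i < length (B # Bs) \<and> (u # us) ! Suc i \<noteq> []"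
    using h by simp
  hence "last ((u # us) ! Suc i) \<notin> (B # Bs) ! Suc i"
    using assms unfolding proper_boundaries_def by blast
  thus "last (us ! i) \<notin> Bs ! i" by simp
next
  fix i assume h: "1 \<le> i \<and> i \<le> length Bs - 1 \<and> us ! i = []"
  have "1 \<le> Suc i \<and> Suc i \<le> length (B # Bs) - 1 \<and> (u # us) ! Suc i = []" using h by auto
  hence "\<not> (B # Bs) ! (Suc i - 1) \<subseteq> (B # Bs) ! Suc i \<and> \<not> (B # Bs) ! Suc i \<subseteq> (B # Bs) ! (Suc i - 1)"
    using assms unfolding proper_boundaries_def by blast
  moreover have "(B # Bs) ! (Suc i - 1) = Bs ! (i - 1)" using h by (cases i) auto
  ultimately show "\<not> Bs ! (i - 1) \<subseteq> Bs ! i" "\<not> Bs ! i \<subseteq> Bs ! (i - 1)" by auto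
qed

lemma proper_boundaries_last_notin:
  "proper_boundaries (u # us) (B # Bs) \<Longrightarrow> u \<noteq> [] \<Longrightarrow> last u \<notin> B"
  unfolding proper_boundaries_def by (metis (no_types, lifting) le0 length_Cons nth_Cons_0 zero_less_Suc)

lemma proper_boundaries_hd_notin:
  "proper_boundaries (u # u' # us) (B # Bs) \<Longrightarrow> u' \<noteq> [] \<Longrightarrow> hd u' \<notin> B"
  unfolding proper_boundaries_def by (drule conjunct1, drule spec[of _ 1]) simp

lemma proper_boundaries_incomparable:
  "proper_boundaries (u # [] # us) (B # B' # Bs) \<Longrightarrow> \<not> B \<subseteq> B' \<and> \<not> B' \<subseteq> B"
  unfolding proper_boundaries_def by (drule conjunct2, drule conjunct2, drule spec[of _ 1]) simp

lemma reduced_map_Opt_append: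
  "reduced P \<Longrightarrow> (u \<noteq> [] \<and> P \<noteq> [] \<longrightarrow> separated (Opt (last u)) (hd P))
   \<Longrightarrow> reduced (map Opt u @ P)"
proof (induction u)
  case Nil thus ?case by simp
next
  case (Cons a u)
  thus ?case by (cases u) (auto simp: reduced_Cons)
qed

lemma reduced_pattern_product:
  assumes "length us = length Bs + 1" "proper_boundaries us Bs" "\<forall>B\<in>set Bs. finite B \<and> B \<noteq> {}"
  shows "reduced (pattern_product us Bs)"
  using assms
proof (induction Bs arbitrary: us)
  case Nil
  then obtain u where "us = [u]" by (cases us) auto
  thus ?case using reduced_map_Opt_append[of "[]" u] by simp
next
  case (Cons B Bs)
  then obtain u u' us' where u: "us = u # u' # us'" by (cases us; cases "tl us") auto
  let ?T = "pattern_product (u' # us') Bs"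
  have "reduced ?T"
    using Cons.IH[of "u' # us'"] Cons.prems proper_boundaries_Cons u by auto
  moreover have "separated (Star B) (hd ?T)" if "?T \<noteq> []"
  proof (cases u')
    case (Cons c u'')
    with Cons.prems u have "c \<notin> B" using proper_boundaries_hd_notin[of u u' us' B Bs] by simp
    with Cons that show ?thesis by (cases Bs; cases us') auto
  next
    case Nil
    with that Cons.prems(1) u obtain B' Bs' u3 us3 where "Bs = B' # Bs'" "us' = u3 # us3"
      by (cases Bs; cases us') auto
    with Nil Cons.prems(2) u proper_boundaries_incomparable[of u us' B B' Bs'] show ?thesis
      by simp
  qed
  ultimately have "reduced (Star B # ?T)" using Cons.prems(3) by (simp add: reduced_Cons)
  with Cons.prems u proper_boundaries_last_notin[of u "u' # us'" B Bs]
  have "reduced (map Opt u @ Star B # ?T)" by (intro reduced_map_Opt_append) auto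
  thus ?case using u by simp
qed

lemma map_Opt_append_eq:
  assumes "map Opt u @ P = map Opt t @ Q"
    and "P = [] \<or> (\<exists>B P'. P = Star B # P')" "Q = [] \<or> (\<exists>B Q'. Q = Star B # Q')"
  shows "u = t \<and> P = Q"
  using assms
proof (induction u arbitrary: t)
  case Nil thus ?case by (cases t) auto
next
  case (Cons a u) thus ?case by (cases t) auto
qed

lemma pattern_product_inj:
  "length us = length Bs + 1 \<Longrightarrow> length ts = length Cs + 1
   \<Longrightarrow> pattern_product us Bs = pattern_product ts Cs \<Longrightarrow> us = ts \<and> Bs = Cs"
proof (induction Bs arbitrary: us ts Cs)
  case Nil
  then obtain u where u: "us = [u]" by (cases us) auto
  show ?case
  proof (cases Cs)
    case Nil2: Nil
    then obtain t where "ts = [t]" using Nil by (cases ts) auto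
    thus ?thesis using Nil Nil2 u by (simp add: inj_map_eq_map inj_def)
  next
    case (Cons C Cs')
    then obtain t ts' where "ts = t # ts'" using Nil by (cases ts) auto
    with Nil u Cons map_Opt_append_eq[of u "[]" t] show ?thesis by simp
  qed
next
  case (Cons B Bs)
  then obtain u us' where u: "us = u # us'" by (cases us) auto
  show ?case
  proof (cases Cs)
    case Nil
    then obtain t where "ts = [t]" using Cons by (cases ts) auto
    with Cons u Nil map_Opt_append_eq[of u "Star B # pattern_product us' Bs" t "[]"]
    show ?thesis by simp
  next
    case CC: (Cons C Cs')
    then obtain t ts' where t: "ts = t # ts'" using Cons.prems by (cases ts) auto
    have "map Opt u @ Star B # pattern_product us' Bs = map Opt t @ Star C # pattern_product ts' Cs'"
      using Cons.prems u t CC by simp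
    from map_Opt_append_eq[OF this]
    have "u = t" "B = C" "pattern_product us' Bs = pattern_product ts' Cs'" by auto
    with Cons.IH[of us' ts' Cs'] Cons.prems u t CC show ?thesis by simp
  qed
qed

lemma proper_length: "proper A us Bs \<Longrightarrow> length us = length Bs + 1"
  by (simp add: proper_def fact_pattern_def)

lemma proper_reduced_pattern_product:
  assumes "finite A" "proper A us Bs"
  shows "reduced (pattern_product us Bs)"
proof (rule reduced_pattern_product)
  show "length us = length Bs + 1" by (rule proper_length[OF assms(2)])
  show "proper_boundaries us Bs" using assms(2) by (simp add: proper_iff_boundaries)
  show "\<forall>B\<in>set Bs. finite B \<and> B \<noteq> {}"
    using assms finite_subset by (fastforce simp: proper_def fact_pattern_def)
qed

lemma adequate_in_pattern_product_iff:
  assumes "proper A us Bs" "adequate us Bs v"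
  shows "in_product (pattern_product us Bs) z \<longleftrightarrow> subseq z (v (length z))"
  using subseq_iff_in_pattern_product[OF proper_length[OF assms(1)], of "v (length z)" "length z" z]
    assms(2)
  by (simp add: adequate_def)

theorem lemma4:
  fixes A :: "'a set"
    and us ts :: "'a list list" and Bs Cs :: "'a set list"
    and v w :: "nat \<Rightarrow> 'a list"
  assumes "finite A"
    and "proper A us Bs" and "proper A ts Cs"
    and "adequate us Bs v" and "adequate ts Cs w"
    and "\<forall>n. simeq n (v n) (w n)"
  shows "us = ts \<and> Bs = Cs"
proof -
  have "in_product (pattern_product us Bs) = in_product (pattern_product ts Cs)"
  proof
    fix z
    have "subseq z (v (length z)) \<longleftrightarrow> subseq z (w (length z))"
      using assms(6) by (auto simp: simeq_def Sub_def set_eq_iff)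
    thus "in_product (pattern_product us Bs) z \<longleftrightarrow> in_product (pattern_product ts Cs) z"
      using adequate_in_pattern_product_iff assms(2-5) by metis
  qed
  with proper_reduced_pattern_product assms(1-3)
  have "pattern_product us Bs = pattern_product ts Cs" by (blast intro: reduced_product_unique)
  with pattern_product_inj proper_length assms(2,3) show ?thesis by blast
qed

end
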